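(* Let $F(s)$ be an entire function of genus zero or one. Suppose that (i) $F(s)$ is real on the real axis; (ii) there exists a real number $\sigma_0$ such that all zeros of $F$ lie in the vertical strip $\sigma_0<\Re(s)<1/2$ except for finitely many zeros; (iii) $F$ has only finitely many zeros in the half-plane $\Re(s)\geq 1/2$; (iv) there exists $C>0$ such that $N(T)\leq C T\log T$ as $T\to\infty$, where $N(T)$ is the number of zeros $\rho$ of $F$ with $0\leq \Im(\rho)<T$; (v) $F(1-\sigma)/F(\sigma)>0$ for all sufficiently large real $\sigma$, and $F(1-\sigma)/F(\sigma)\to 0$ as $\sigma\to+\infty$. Then there exist a constant $C'$, an integer $m\geq 0$ and a real number $B'\geq 0$ such that \[ F(s)= C' s^m e^{B' s}\prod_{0\neq\rho\in\mathbb{R}}\Bigl(1-\frac{s}{\rho}\Bigr)\prod_{\Im(\rho)>0}\left[\Bigl(1-\frac{s}{\rho}\Bigr)\Bigl(1-\frac{s}{\overline{\rho}}\Bigr)\right], \] where $\rho$ runs over the nonzero zeros of $F$ counted with multiplicity, and the product converges absolutely on every compact subset of $\mathbb{C}$ when the factors are grouped as in the brackets.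
   Context: An entire function has genus zero or one if it has a Hadamard factorization $e^{a+bs}s^m\prod_\rho(1-s/\rho)e^{s/\rho}$ with $\sum_\rho|\rho|^{-2}<\infty$. *)

theory Defs
  imports "HOL-Complex_Analysis.Complex_Analysis"
begin

definition zero_mult :: "(complex \<Rightarrow> complex) \<Rightarrow> complex \<Rightarrow> nat" where
  "zero_mult F \<rho> = (if F \<rho> = 0 then nat (zorder F \<rho>) else 0)"

definition nz_zeros :: "(complex \<Rightarrow> complex) \<Rightarrow> complex set" where
  "nz_zeros F = {\<rho>. F \<rho> = 0 \<and> \<rho> \<noteq> 0}"

definition set_prod_conv :: "('a \<Rightarrow> complex) \<Rightarrow> 'a set \<Rightarrow> complex \<Rightarrow> bool" where
  "set_prod_conv g A P \<longleftrightarrow> ((\<lambda>X. \<Prod>x\<in>X. g x) \<longlongrightarrow> P) (finite_subsets_at_top A)"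

text \<open>Entire function of genus zero or one: Hadamard factorization
  e^(a+bs) s^m prod_rho (1 - s/rho) e^(s/rho), with sum |rho|^(-2) finite
  (zeros counted with multiplicity).\<close>
definition genus_le_one :: "(complex \<Rightarrow> complex) \<Rightarrow> bool" where
  "genus_le_one F \<longleftrightarrow> F holomorphic_on UNIV \<and>
     (\<lambda>\<rho>. real (zero_mult F \<rho>) / (norm \<rho>)\<^sup>2) summable_on nz_zeros F \<and>
     (\<exists>(a::complex) (b::complex) (m::nat) (P::complex \<Rightarrow> complex). \<forall>s.
        set_prod_conv (\<lambda>\<rho>. ((1 - s / \<rho>) * exp (s / \<rho>)) ^ zero_mult F \<rho>) (nz_zeros F) (P s) \<and>
        F s = exp (a + b * s) * s ^ m * P s)"

definition zero_count :: "(complex \<Rightarrow> complex) \<Rightarrow> real \<Rightarrow> nat" where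
  "zero_count F T = (\<Sum>\<rho>\<in>{\<rho>. F \<rho> = 0 \<and> 0 \<le> Im \<rho> \<and> Im \<rho> < T}. zero_mult F \<rho>)"

definition upper_zeros :: "(complex \<Rightarrow> complex) \<Rightarrow> complex set" where
  "upper_zeros F = {\<rho>. F \<rho> = 0 \<and> \<rho> \<noteq> 0 \<and> Im \<rho> \<ge> 0}"

definition grouped_factor :: "(complex \<Rightarrow> complex) \<Rightarrow> complex \<Rightarrow> complex \<Rightarrow> complex" where
  "grouped_factor F s \<rho> =
     (if Im \<rho> = 0 then 1 - s / \<rho> else (1 - s / \<rho>) * (1 - s / cnj \<rho>)) ^ zero_mult F \<rho>"

end

theory Submission
  imports Defs
begin

(*
  Since F is real on the real axis, F (cnj s) = cnj (F s): the nonzero zeros come in conjugate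
  pairs of equal multiplicity, and the Hadamard product can be regrouped over the zeros with
  Im rho >= 0.  The convergence factors of a pair combine to exp (2 m s Re rho / |rho|^2); as
  Re rho is bounded for all but finitely many zeros, these exponents are dominated by the
  convergent sum of m / |rho|^2 and can be absorbed into the linear exponent.  This gives
  F s = C' s^m exp (c s) P s with P the grouped product, which converges absolutely and
  uniformly on compact sets.  P is real on the real axis, hence so is exp (a + c x) for large x,
  which forces c to be real.  Finally, for a zero with Re rho < 1/2 the point 1 - sigma is
  closer to rho than sigma up to a factor exp (-O (sigma m / (sigma^2 + |rho|^2))), and the sum
  of m / (sigma^2 + |rho|^2) tends to 0.  Hence |F (1 - sigma) / F sigma| is at least
  kappa exp (c (1 - 2 sigma) - o (sigma)), which stays away from 0 if c < 0.
*)

section \<open>Unordered sums and products\<close>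

lemma finite_if_summable_on_ge:
  fixes w :: "'a \<Rightarrow> real"
  assumes "w summable_on A" "\<And>x. x \<in> A \<Longrightarrow> w x \<ge> 0"
    and "B \<subseteq> A" "\<And>x. x \<in> B \<Longrightarrow> w x \<ge> e" "e > 0"
  shows "finite B"
proof (rule ccontr)
  assume "infinite B"
  define n where "n = nat \<lceil>infsum w A / e\<rceil> + 1"
  obtain C where C: "C \<subseteq> B" "finite C" "card C = n"
    using infinite_arbitrarily_large[OF \<open>infinite B\<close>] by blast
  have "real n * e \<le> sum w C"
    using sum_mono[of C "\<lambda>_. e" w] C assms(4) by auto
  also have "\<dots> \<le> infsum w A"
    using finite_sum_le_infsum[OF assms(1) C(2)] C(1) assms(2,3) by auto
  finally have "real n * e \<le> infsum w A" .
  moreover have "infsum w A / e < real n"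
    unfolding n_def by linarith
  ultimately show False
    using assms(5) by (simp add: field_simps)
qed

lemma summable_on_comparison_cofinite:
  fixes w :: "'a \<Rightarrow> real" and h :: "'a \<Rightarrow> 'b::banach"
  assumes "w summable_on A" "finite X" "\<And>x. x \<in> A - X \<Longrightarrow> norm (h x) \<le> c * w x"
  shows "h summable_on A"
proof -
  have "(\<lambda>x. c * w x) summable_on (A - X)"
    using summable_on_cmult_right[OF summable_on_cofin_subset[OF assms(1,2)]] .
  then have "(\<lambda>x. norm (h x)) summable_on (A - X)"
    by (rule summable_on_comparison_test) (use assms(3) in auto)
  then have "h summable_on (A - X)"
    using abs_summable_summable by blast
  moreover have "h summable_on (A \<inter> X)"
    using assms(2) by simp
  ultimately have "h summable_on ((A - X) \<union> (A \<inter> X))"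
    by (rule summable_on_Un_disjoint) blast
  moreover have "(A - X) \<union> (A \<inter> X) = A"
    by blast
  ultimately show ?thesis
    by simp
qed

lemma summable_on_nonneg_tail_le:
  fixes f :: "'a \<Rightarrow> real"
  assumes "f summable_on A" "\<And>x. x \<in> A \<Longrightarrow> f x \<ge> 0" "\<epsilon> > 0"
  obtains Y0 where "finite Y0" "Y0 \<subseteq> A" "\<And>V. finite V \<Longrightarrow> V \<subseteq> A - Y0 \<Longrightarrow> sum f V \<le> \<epsilon>"
proof -
  have "(sum f \<longlongrightarrow> infsum f A) (finite_subsets_at_top A)"
    using has_sum_infsum[OF assms(1)] unfolding has_sum_def .
  then have "\<forall>\<^sub>F Y in finite_subsets_at_top A. dist (sum f Y) (infsum f A) < \<epsilon>"
    using assms(3) tendstoD by blast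
  then obtain Y0 where Y0: "finite Y0" "Y0 \<subseteq> A" "dist (sum f Y0) (infsum f A) < \<epsilon>"
    unfolding eventually_finite_subsets_at_top by blast
  have "sum f V \<le> \<epsilon>" if V: "finite V" "V \<subseteq> A - Y0" for V
  proof -
    have "sum f Y0 + sum f V = sum f (Y0 \<union> V)"
      by (rule sum.union_disjoint[symmetric]) (use V Y0 in auto)
    also have "\<dots> \<le> infsum f A"
      using finite_sum_le_infsum[OF assms(1), of "Y0 \<union> V"] V Y0 assms(2) by auto
    finally show ?thesis
      using Y0(3) unfolding dist_real_def by linarith
  qed
  with Y0 that show ?thesis
    by blast
qed

lemma norm_power_minus_one_le:
  fixes z :: "'a::real_normed_field"
  shows "norm (z ^ n - 1) \<le> (1 + norm (z - 1)) ^ n - 1"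
proof (induction n)
  case (Suc n)
  have "norm (z ^ Suc n - 1) = norm (z * (z ^ n - 1) + (z - 1))"
    by (simp add: algebra_simps)
  also have "\<dots> \<le> norm z * norm (z ^ n - 1) + norm (z - 1)"
    by (metis norm_mult norm_triangle_ineq)
  also have "norm z \<le> 1 + norm (z - 1)"
    by (metis add.commute diff_add_cancel norm_triangle_ineq norm_one)
  then have "norm z * norm (z ^ n - 1) \<le> (1 + norm (z - 1)) * ((1 + norm (z - 1)) ^ n - 1)"
    using Suc by (intro mult_mono) auto
  finally show ?case
    by (simp add: algebra_simps)
qed simp

lemma norm_prod_minus_one_le:
  fixes g :: "'a \<Rightarrow> 'b::real_normed_field"
  assumes "finite A" "\<And>x. x \<in> A \<Longrightarrow> norm (g x - 1) \<le> M x"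
  shows "norm ((\<Prod>x\<in>A. g x) - 1) \<le> (\<Prod>x\<in>A. 1 + M x) - 1"
  using assms
proof (induction A rule: finite_induct)
  case (insert a A)
  have IH: "norm ((\<Prod>x\<in>A. g x) - 1) \<le> (\<Prod>x\<in>A. 1 + M x) - 1"
    and Ma: "norm (g a - 1) \<le> M a"
    using insert by auto
  have "norm (g a) \<le> 1 + M a"
    using Ma norm_triangle_ineq[of "g a - 1" 1] by simp
  then have "norm (g a) * norm ((\<Prod>x\<in>A. g x) - 1) \<le> (1 + M a) * ((\<Prod>x\<in>A. 1 + M x) - 1)"
    using IH order_trans[OF norm_ge_zero Ma] by (intro mult_mono) auto
  moreover have "norm ((\<Prod>x\<in>insert a A. g x) - 1) = norm (g a * ((\<Prod>x\<in>A. g x) - 1) + (g a - 1))"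
    using insert by (simp add: algebra_simps)
  then have "norm ((\<Prod>x\<in>insert a A. g x) - 1) \<le> norm (g a) * norm ((\<Prod>x\<in>A. g x) - 1) + norm (g a - 1)"
    by (metis norm_mult norm_triangle_ineq)
  moreover have "(1 + M a) * ((\<Prod>x\<in>A. 1 + M x) - 1) + M a = (\<Prod>x\<in>insert a A. 1 + M x) - 1"
    using insert by (simp add: algebra_simps)
  ultimately show ?case
    using Ma by linarith
qed simp

lemma norm_prod_superset_diff_le:
  fixes g :: "'a \<Rightarrow> 'b::real_normed_field"
  assumes Z: "finite Z" "Y \<subseteq> Z"
    and bound: "\<And>x. x \<in> Z \<Longrightarrow> norm (g x - 1) \<le> M x" and M_nonneg: "\<And>x. x \<in> Z \<Longrightarrow> M x \<ge> 0"
  shows "norm ((\<Prod>x\<in>Z. g x) - (\<Prod>x\<in>Y. g x)) \<le> exp (sum M Y) * (exp (sum M (Z - Y)) - 1)"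
proof -
  have "norm (g x) \<le> 1 + M x" if "x \<in> Y" for x
    using bound[of x] norm_triangle_ineq[of "g x - 1" 1] that Z(2) by auto
  then have "(\<Prod>x\<in>Y. norm (g x)) \<le> (\<Prod>x\<in>Y. 1 + M x)"
    by (intro prod_mono) auto
  also have "\<dots> \<le> exp (sum M Y)"
    by (rule prod_le_exp_sum) (use M_nonneg Z in auto)
  finally have head: "norm (\<Prod>x\<in>Y. g x) \<le> exp (sum M Y)"
    by (simp add: prod_norm)
  have "norm ((\<Prod>x\<in>Z - Y. g x) - 1) \<le> (\<Prod>x\<in>Z - Y. 1 + M x) - 1"
    by (rule norm_prod_minus_one_le) (use Z bound in auto)
  also have "\<dots> \<le> exp (sum M (Z - Y)) - 1"
    using prod_le_exp_sum[of "Z - Y" M] M_nonneg by auto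
  finally have rest: "norm ((\<Prod>x\<in>Z - Y. g x) - 1) \<le> exp (sum M (Z - Y)) - 1" .
  have "(\<Prod>x\<in>Z. g x) - (\<Prod>x\<in>Y. g x) = (\<Prod>x\<in>Y. g x) * ((\<Prod>x\<in>Z - Y. g x) - 1)"
    using prod.subset_diff[OF Z(2,1)] by (simp add: algebra_simps)
  then show ?thesis
    using head rest by (simp add: norm_mult mult_mono)
qed

lemma filterlim_finite_subsets_at_topI:
  assumes "\<And>Y. finite Y \<Longrightarrow> Y \<subseteq> A \<Longrightarrow> finite (\<phi> Y) \<and> \<phi> Y \<subseteq> B"
    and "\<And>X. finite X \<Longrightarrow> X \<subseteq> B \<Longrightarrow>
           \<exists>Y0. finite Y0 \<and> Y0 \<subseteq> A \<and> (\<forall>Y. finite Y \<and> Y0 \<subseteq> Y \<and> Y \<subseteq> A \<longrightarrow> X \<subseteq> \<phi> Y)"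
  shows "filterlim \<phi> (finite_subsets_at_top B) (finite_subsets_at_top A)"
  unfolding filterlim_iff
proof (intro allI impI)
  fix P
  assume "eventually P (finite_subsets_at_top B)"
  then obtain X where X: "finite X" "X \<subseteq> B" "\<And>Y. finite Y \<Longrightarrow> X \<subseteq> Y \<Longrightarrow> Y \<subseteq> B \<Longrightarrow> P Y"
    by (auto simp: eventually_finite_subsets_at_top)
  obtain Y0 where Y0: "finite Y0" "Y0 \<subseteq> A" "\<And>Y. finite Y \<Longrightarrow> Y0 \<subseteq> Y \<Longrightarrow> Y \<subseteq> A \<Longrightarrow> X \<subseteq> \<phi> Y"
    using assms(2)[OF X(1,2)] by auto
  have "P (\<phi> Y)" if "finite Y" "Y0 \<subseteq> Y" "Y \<subseteq> A" for Y
    using X(3)[of "\<phi> Y"] assms(1)[OF that(1,3)] Y0(3)[OF that] by blast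
  with Y0(1,2) show "eventually (\<lambda>Y. P (\<phi> Y)) (finite_subsets_at_top A)"
    unfolding eventually_finite_subsets_at_top by blast
qed

lemma uniform_limit_prod_finite_subsets:
  fixes g :: "'b \<Rightarrow> 'a \<Rightarrow> complex"
  assumes lim: "\<And>s. s \<in> K \<Longrightarrow> ((\<lambda>Y. \<Prod>x\<in>Y. g s x) \<longlongrightarrow> P s) (finite_subsets_at_top U)"
    and M_summable: "M summable_on U" and M_nonneg: "\<And>x. x \<in> U \<Longrightarrow> M x \<ge> 0"
    and bound: "\<And>s x. s \<in> K \<Longrightarrow> x \<in> U \<Longrightarrow> norm (g s x - 1) \<le> M x"
  shows "uniform_limit K (\<lambda>Y s. \<Prod>x\<in>Y. g s x) P (finite_subsets_at_top U)"
  unfolding uniform_limit_iff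
proof (intro allI impI)
  fix e :: real
  assume "e > 0"
  define S where "S = infsum M U"
  define \<delta> where "\<delta> = min (1/2) (e / (4 * exp S))"
  have \<delta>: "\<delta> > 0" "\<delta> \<le> 1/2" "\<delta> \<le> e / (4 * exp S)"
    unfolding \<delta>_def using \<open>e > 0\<close> by auto
  obtain Y0 where Y0: "finite Y0" "Y0 \<subseteq> U" and tail: "\<And>V. finite V \<Longrightarrow> V \<subseteq> U - Y0 \<Longrightarrow> sum M V \<le> \<delta>"
    using summable_on_nonneg_tail_le[OF M_summable M_nonneg \<delta>(1)] by blast
  have "exp \<delta> \<le> 1 + 2 * \<delta>"
    using real_exp_bound_lemma \<delta> by auto
  then have "exp S * (exp \<delta> - 1) \<le> exp S * (2 * (e / (4 * exp S)))"
    using \<delta> by (intro mult_left_mono) auto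
  then have small: "exp S * (exp \<delta> - 1) < e"
    using \<open>e > 0\<close> by simp
  have "dist (\<Prod>x\<in>Y. g s x) (P s) < e" if Y: "finite Y" "Y0 \<subseteq> Y" "Y \<subseteq> U" and s: "s \<in> K" for Y s
  proof -
    have step: "norm ((\<Prod>x\<in>Z. g s x) - (\<Prod>x\<in>Y. g s x)) \<le> exp S * (exp \<delta> - 1)"
      if Z: "finite Z" "Y \<subseteq> Z" "Z \<subseteq> U" for Z
    proof -
      have "norm ((\<Prod>x\<in>Z. g s x) - (\<Prod>x\<in>Y. g s x)) \<le> exp (sum M Y) * (exp (sum M (Z - Y)) - 1)"
        using Z bound[OF s] M_nonneg by (intro norm_prod_superset_diff_le) auto
      also have "\<dots> \<le> exp S * (exp \<delta> - 1)"
        using finite_sum_le_infsum[OF M_summable Y(1,3)] M_nonneg tail[of "Z - Y"] Z Y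
        unfolding S_def by (intro mult_mono) (auto intro: sum_nonneg)
      finally show ?thesis .
    qed
    have "dist (P s) (\<Prod>x\<in>Y. g s x) \<le> exp S * (exp \<delta> - 1)"
    proof (rule tendsto_upperbound)
      show "((\<lambda>Z. dist (\<Prod>x\<in>Z. g s x) (\<Prod>x\<in>Y. g s x)) \<longlongrightarrow> dist (P s) (\<Prod>x\<in>Y. g s x))
              (finite_subsets_at_top U)"
        by (intro tendsto_dist lim s tendsto_const)
      show "\<forall>\<^sub>F Z in finite_subsets_at_top U. dist (\<Prod>x\<in>Z. g s x) (\<Prod>x\<in>Y. g s x) \<le> exp S * (exp \<delta> - 1)"
        unfolding eventually_finite_subsets_at_top using Y step by (auto simp: dist_norm)
    qed simp
    then show ?thesis
      using small by (simp add: dist_commute)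
  qed
  then show "\<forall>\<^sub>F Y in finite_subsets_at_top U. \<forall>s\<in>K. dist (\<Prod>x\<in>Y. g s x) (P s) < e"
    unfolding eventually_finite_subsets_at_top using Y0 by blast
qed

lemma exp_minus_one_le_mult_exp:
  fixes y :: real
  assumes "y \<ge> 0"
  shows "exp y - 1 \<le> y * exp y"
proof -
  have "(1 - y) * exp y \<le> exp (-y) * exp y"
    using exp_ge_add_one_self[of "-y"] by (intro mult_right_mono) auto
  then show ?thesis
    by (simp add: exp_minus field_simps)
qed

lemma exp_neg_le_divide:
  fixes a b :: real
  assumes "a > 0" "b > 0"
  shows "exp (- ((b - a) / a)) \<le> a / b"
proof -
  have "b / a \<le> exp ((b - a) / a)"
    using exp_ge_add_one_self[of "(b - a) / a"] assms by (simp add: field_simps)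
  then have "1 / exp ((b - a) / a) \<le> 1 / (b / a)"
    using assms by (intro divide_left_mono) auto
  then show ?thesis
    by (simp add: exp_minus field_simps)
qed

lemma Im_eq_0_if_exp_real:
  fixes a c :: complex
  assumes real: "\<And>x. x \<ge> X \<Longrightarrow> exp (a + c * of_real x) \<in> \<real>"
  shows "Im c = 0"
proof (rule ccontr)
  assume "Im c \<noteq> 0"
  have sin_zero: "sin (Im a + Im c * x) = 0" if "x \<ge> X" for x
    using real[OF that] by (simp add: complex_is_Real_iff Im_exp)
  define \<theta> where "\<theta> = Im a + Im c * X"
  define d where "d = pi / (2 * \<bar>Im c\<bar>)"
  have "d > 0"
    unfolding d_def using \<open>Im c \<noteq> 0\<close> by simp
  have "sin \<theta> = 0"
    unfolding \<theta>_def by (rule sin_zero) simp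
  \<comment> \<open>a quarter period later the sine vanishes again, so \<open>cos \<theta> = 0\<close> as well\<close>
  have shifted: "sin (\<theta> + Im c * d) = 0"
    using sin_zero[of "X + d"] \<open>d > 0\<close> unfolding \<theta>_def by (simp add: algebra_simps)
  have "cos \<theta> = 0"
  proof (cases "Im c > 0")
    case True
    then have "Im c * d = pi / 2"
      unfolding d_def by simp
    with shifted show ?thesis
      by (simp only:) (simp add: sin_add)
  next
    case False
    then have "Im c * d = - (pi / 2)"
      using \<open>Im c \<noteq> 0\<close> unfolding d_def by (simp add: field_simps)
    with shifted show ?thesis
      by (simp only:) (simp add: sin_diff)
  qed
  with \<open>sin \<theta> = 0\<close> show False
    using sin_cos_squared_add[of \<theta>] by simp
qed

lemma inverse_add_inverse_cnj:
  fixes \<rho> :: complex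
  assumes "\<rho> \<noteq> 0"
  shows "1 / \<rho> + 1 / cnj \<rho> = of_real (2 * Re \<rho> / (norm \<rho>)\<^sup>2)"
proof -
  have "1 / \<rho> + 1 / cnj \<rho> = (\<rho> + cnj \<rho>) / (\<rho> * cnj \<rho>)"
    using assms by (simp add: field_simps)
  then show ?thesis
    by (simp add: complex_add_cnj complex_norm_square[symmetric])
qed

lemma reflection_quotient_far:
  fixes \<rho> :: complex and \<sigma> :: real
  assumes "\<sigma> \<ge> 2 * (norm \<rho> + 1)"
  shows "norm (\<rho> - of_real \<sigma>) > 0"
    and "1/4 \<le> norm (\<rho> - of_real (1 - \<sigma>)) / norm (\<rho> - of_real \<sigma>)"
proof -
  have \<sigma>: "\<sigma> > 0"
    using assms by (smt (verit) norm_ge_zero)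
  have "\<sigma> - norm \<rho> \<le> norm (\<rho> - of_real \<sigma>)"
    using norm_triangle_ineq2[of "of_real \<sigma>" \<rho>] \<sigma> by (simp add: norm_minus_commute)
  then show pos: "norm (\<rho> - of_real \<sigma>) > 0"
    using assms by (smt (verit) norm_ge_zero)
  have "norm (\<rho> - of_real \<sigma>) \<le> 2 * \<sigma>"
    using norm_triangle_ineq4[of \<rho> "of_real \<sigma>"] \<sigma> assms by simp
  moreover have "\<sigma> / 2 \<le> norm (\<rho> - of_real (1 - \<sigma>))"
  proof -
    have "\<sigma> - norm (1 - \<rho>) \<le> norm (\<rho> - of_real (1 - \<sigma>))"
      using norm_triangle_ineq2[of "of_real \<sigma>" "1 - \<rho>"] \<sigma> by (simp add: algebra_simps)
    moreover have "norm (1 - \<rho>) \<le> 1 + norm \<rho>"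
      using norm_triangle_ineq4[of 1 \<rho>] by simp
    ultimately show ?thesis
      using assms by simp
  qed
  ultimately have "(\<sigma> / 2) / (2 * \<sigma>) \<le> norm (\<rho> - of_real (1 - \<sigma>)) / norm (\<rho> - of_real \<sigma>)"
    using pos \<sigma> by (intro frac_le) auto
  then show "1/4 \<le> norm (\<rho> - of_real (1 - \<sigma>)) / norm (\<rho> - of_real \<sigma>)"
    using \<sigma> by simp
qed

text \<open>For a zero \<open>x + iy\<close> with \<open>x < 1/2\<close> the point \<open>1 - \<sigma>\<close> is closer than \<open>\<sigma>\<close>, but only
  by \<open>O(\<sigma>)\<close> in the squared distances, which themselves are of order \<open>\<sigma>\<^sup>2 + x\<^sup>2 + y\<^sup>2\<close>.\<close>
lemma reflection_sq_dist_strip: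
  fixes x y \<sigma> \<sigma>0 K :: real
  assumes x: "\<sigma>0 < x" "x < 1/2" and K: "\<bar>\<sigma>0\<bar> + 1 \<le> K"
    and \<sigma>: "\<sigma> \<ge> 2 * (1 - \<sigma>0)" "\<sigma> \<ge> 2 * K"
  defines "A \<equiv> (x - (1 - \<sigma>))\<^sup>2 + y\<^sup>2" and "B \<equiv> (x - \<sigma>)\<^sup>2 + y\<^sup>2"
  shows "0 < A" "A < B" "B - A \<le> 4 * K * \<sigma>" "\<sigma>\<^sup>2 + x\<^sup>2 + y\<^sup>2 \<le> 5 * A"
proof -
  have "\<sigma> \<ge> 2" "\<bar>x\<bar> \<le> K"
    using x K \<sigma> by auto
  have diff: "B - A = (2 * \<sigma> - 1) * (1 - 2 * x)"
    unfolding A_def B_def by (simp add: power2_eq_square algebra_simps)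
  have "\<sigma> / 2 \<le> x - (1 - \<sigma>)"
    using x(1) \<sigma>(1) by (smt (verit) field_sum_of_halves)
  then have "(\<sigma> / 2)\<^sup>2 \<le> (x - (1 - \<sigma>))\<^sup>2"
    using \<open>\<sigma> \<ge> 2\<close> by (intro power_mono) auto
  moreover have "(\<sigma> / 2)\<^sup>2 = \<sigma>\<^sup>2 / 4"
    by (simp add: power_divide)
  ultimately have A_ge: "\<sigma>\<^sup>2 / 4 + y\<^sup>2 \<le> A"
    unfolding A_def by linarith
  have "4 \<le> \<sigma>\<^sup>2" "0 \<le> y\<^sup>2"
    using \<open>\<sigma> \<ge> 2\<close> power_mono[of 2 \<sigma> 2] by auto
  then show "0 < A"
    using A_ge by linarith
  have "0 < (2 * \<sigma> - 1) * (1 - 2 * x)"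
    using \<open>\<sigma> \<ge> 2\<close> x(2) by (intro mult_pos_pos) auto
  then show "A < B"
    using diff by linarith
  have "(2 * \<sigma> - 1) * (1 - 2 * x) \<le> (2 * \<sigma>) * (2 * K)"
    using \<open>\<sigma> \<ge> 2\<close> x K by (intro mult_mono) auto
  moreover have "(2 * \<sigma>) * (2 * K) = 4 * K * \<sigma>"
    by simp
  ultimately show "B - A \<le> 4 * K * \<sigma>"
    using diff by linarith
  have "x\<^sup>2 \<le> (\<sigma> / 2)\<^sup>2"
    using \<open>\<bar>x\<bar> \<le> K\<close> \<sigma>(2) power_mono[of "\<bar>x\<bar>" "\<sigma> / 2" 2] by simp
  then show "\<sigma>\<^sup>2 + x\<^sup>2 + y\<^sup>2 \<le> 5 * A"
    using A_ge \<open>(\<sigma> / 2)\<^sup>2 = \<sigma>\<^sup>2 / 4\<close> \<open>0 \<le> y\<^sup>2\<close> by linarith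
qed

section \<open>Entire functions that are real on the real axis\<close>

lemma cnj_symmetric_if_real_on_real:
  fixes F :: "complex \<Rightarrow> complex"
  assumes holo: "F holomorphic_on UNIV" and real: "\<And>x::real. F (of_real x) \<in> \<real>"
  shows "F (cnj z) = cnj (F z)"
proof -
  define f where "f = (\<lambda>z. F z - (cnj \<circ> F \<circ> cnj) z)"
  have "(cnj \<circ> F \<circ> cnj) holomorphic_on UNIV"
    by (rule holomorphic_on_compose_cnj_cnj) (use holo in auto)
  then have "f holomorphic_on UNIV"
    unfolding f_def using holo by (intro holomorphic_intros)
  moreover have "(0::complex) islimpt \<real>"
    unfolding islimpt_approachable
  proof (intro allI impI)
    fix e :: real
    assume "e > 0"
    show "\<exists>x'::complex\<in>\<real>. x' \<noteq> 0 \<and> dist x' 0 < e"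
      by (rule bexI[of _ "of_real (e / 2)"]) (use \<open>e > 0\<close> in \<open>auto simp: dist_norm\<close>)
  qed
  moreover have "f w = 0" if w: "w \<in> \<real>" for w
  proof -
    obtain x where x: "w = of_real x"
      using w by (auto elim: Reals_cases)
    then have "cnj (F w) = F w"
      using real[of x] by (simp add: Reals_cnj_iff)
    then show ?thesis
      unfolding f_def using x by simp
  qed
  ultimately have "f (cnj z) = 0"
    using analytic_continuation[of f UNIV \<real> 0] by auto
  then show ?thesis
    unfolding f_def by simp
qed

lemma zorder_cnj:
  fixes F :: "complex \<Rightarrow> complex"
  assumes holo: "F holomorphic_on UNIV" and sym: "\<And>z. F (cnj z) = cnj (F z)"
    and nonzero: "F \<beta> \<noteq> 0"
  shows "zorder F (cnj \<rho>) = zorder F \<rho>"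
proof -
  have "\<forall>\<^sub>F w in at \<rho>. F w \<noteq> 0"
    using non_zero_neighbour_alt[OF holo open_UNIV connected_UNIV _ _ nonzero, of \<rho>]
    by (auto elim: eventually_mono)
  then have "\<exists>\<^sub>F w in at \<rho>. F w \<noteq> 0"
    using eventually_frequently by force
  moreover have "isolated_singularity_at F \<rho>" "not_essential F \<rho>"
    using holo by (auto intro: isolated_singularity_at_holomorphic not_essential_holomorphic
        holomorphic_on_subset)
  ultimately obtain r where r: "zor_poly F \<rho> \<rho> \<noteq> 0" "r > 0" "zor_poly F \<rho> holomorphic_on cball \<rho> r"
     "\<And>w. w \<in> cball \<rho> r - {\<rho>} \<Longrightarrow> F w = zor_poly F \<rho> w * (w - \<rho>) powi zorder F \<rho>"
    using zorder_exist by blast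
  define g where "g = zor_poly F \<rho>"
  have ball_cnj: "cnj w \<in> cball \<rho> r" if "w \<in> ball (cnj \<rho>) r" for w
  proof -
    have "\<rho> - cnj w = cnj (cnj \<rho> - w)"
      by simp
    then show ?thesis
      using that by (simp add: dist_norm del: complex_cnj_diff)
  qed
  have holo_g: "(cnj \<circ> g \<circ> cnj) holomorphic_on ball (cnj \<rho>) r"
    by (rule holomorphic_on_compose_cnj_cnj) (use r(3) ball_cnj in \<open>auto simp: g_def intro: holomorphic_on_subset\<close>)
  show ?thesis
  proof (rule zorder_eqI[OF open_ball _ holo_g])
    show "cnj \<rho> \<in> ball (cnj \<rho>) r" "(cnj \<circ> g \<circ> cnj) (cnj \<rho>) \<noteq> 0"
      using r by (simp_all add: g_def)
    fix w
    assume "w \<in> ball (cnj \<rho>) r" "w \<noteq> cnj \<rho>"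
    then have "F (cnj w) = g (cnj w) * (cnj w - \<rho>) powi zorder F \<rho>"
      using r(4) ball_cnj unfolding g_def by (metis DiffI complex_cnj_cnj singletonD)
    then show "F w = (cnj \<circ> g \<circ> cnj) w * (w - cnj \<rho>) powi zorder F \<rho>"
      using sym[of "cnj w"] by (simp add: complex_cnj_power_int)
  qed
qed

section \<open>Zeros in a vertical strip\<close>

locale real_entire_zeros_in_strip =
  fixes F :: "complex \<Rightarrow> complex" and \<sigma>0 :: real
  assumes holomorphic: "F holomorphic_on UNIV"
    and weight_summable: "(\<lambda>\<rho>. real (zero_mult F \<rho>) / (norm \<rho>)\<^sup>2) summable_on nz_zeros F"
    and real_on_real: "\<And>x::real. F (complex_of_real x) \<in> \<real>"
    and finite_zeros_off_strip: "finite {\<rho>. F \<rho> = 0 \<and> \<not> (\<sigma>0 < Re \<rho> \<and> Re \<rho> < 1/2)}"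
begin

definition off_strip :: "complex set" where
  "off_strip = {\<rho>. F \<rho> = 0 \<and> \<not> (\<sigma>0 < Re \<rho> \<and> Re \<rho> < 1/2)}"

definition re_bound :: real where
  "re_bound = \<bar>\<sigma>0\<bar> + 1"

definition zero_weight :: "complex \<Rightarrow> real" where
  "zero_weight \<rho> = real (zero_mult F \<rho>) / (norm \<rho>)\<^sup>2"

text \<open>Off this finite set every zero is non-real with \<open>|Re \<rho>| \<le> re_bound\<close>, which makes the
  linear terms summable.\<close>
definition exceptional_zeros :: "complex set" where
  "exceptional_zeros = off_strip \<union> {\<rho>\<in>nz_zeros F. Im \<rho> = 0 \<and> 0 < zero_mult F \<rho> \<and> \<rho> \<notin> off_strip}"

text \<open>The exponent collected from the convergence factors of \<open>\<rho>\<close> and, if \<open>\<rho>\<close> is not real, of \<open>cnj \<rho>\<close>.\<close>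
definition linear_term :: "complex \<Rightarrow> complex" where
  "linear_term \<rho> = of_nat (zero_mult F \<rho>) * (if Im \<rho> = 0 then 1 / \<rho> else 1 / \<rho> + 1 / cnj \<rho>)"

lemma finite_off_strip: "finite off_strip"
  using finite_zeros_off_strip unfolding off_strip_def .

lemma re_bound_ge_1: "re_bound \<ge> 1"
  unfolding re_bound_def by simp

lemma abs_Re_le_re_bound: "F \<rho> = 0 \<Longrightarrow> \<rho> \<notin> off_strip \<Longrightarrow> \<bar>Re \<rho>\<bar> \<le> re_bound"
  unfolding off_strip_def re_bound_def by auto

lemma zero_weight_nonneg: "zero_weight \<rho> \<ge> 0"
  unfolding zero_weight_def by simp

lemma zero_weight_summable: "zero_weight summable_on nz_zeros F"
  using weight_summable unfolding zero_weight_def .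

lemma upper_zeros_subset: "upper_zeros F \<subseteq> nz_zeros F"
  unfolding upper_zeros_def nz_zeros_def by auto

lemma exists_nonzero: "\<exists>z. F z \<noteq> 0"
proof (rule ccontr)
  assume "\<not> (\<exists>z. F z \<noteq> 0)"
  then have "range (\<lambda>t::real. 1 + \<i> * of_real t) \<subseteq> off_strip"
    unfolding off_strip_def by auto
  moreover have "inj (\<lambda>t::real. 1 + \<i> * of_real t)"
    by (auto simp: inj_on_def complex_eq_iff)
  then have "infinite (range (\<lambda>t::real. 1 + \<i> * of_real t))"
    using infinite_UNIV_char_0[where 'a=real] finite_imageD by blast
  ultimately show False
    using finite_off_strip finite_subset by blast
qed

lemma F_cnj: "F (cnj z) = cnj (F z)"
  using cnj_symmetric_if_real_on_real[OF holomorphic real_on_real] .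

lemma zero_mult_cnj: "zero_mult F (cnj \<rho>) = zero_mult F \<rho>"
  using exists_nonzero zorder_cnj[OF holomorphic F_cnj] F_cnj[of \<rho>]
  unfolding zero_mult_def by auto

lemma finite_exceptional_zeros: "finite exceptional_zeros"
proof -
  have "finite {\<rho>\<in>nz_zeros F. Im \<rho> = 0 \<and> 0 < zero_mult F \<rho> \<and> \<rho> \<notin> off_strip}"
  proof (rule finite_if_summable_on_ge[OF zero_weight_summable])
    show "1 / re_bound\<^sup>2 \<le> zero_weight \<rho>"
      if "\<rho> \<in> {\<rho>\<in>nz_zeros F. Im \<rho> = 0 \<and> 0 < zero_mult F \<rho> \<and> \<rho> \<notin> off_strip}" for \<rho>
    proof -
      have "norm \<rho> = \<bar>Re \<rho>\<bar>" "\<rho> \<noteq> 0"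
        using that cmod_eq_Re unfolding nz_zeros_def by auto
      then have "0 < norm \<rho>" "norm \<rho> \<le> re_bound"
        using that abs_Re_le_re_bound unfolding nz_zeros_def by auto
      then have "1 / re_bound\<^sup>2 \<le> 1 / (norm \<rho>)\<^sup>2"
        by (intro divide_left_mono power_mono mult_pos_pos) auto
      also have "\<dots> \<le> zero_weight \<rho>"
        unfolding zero_weight_def using that by (intro divide_right_mono) auto
      finally show ?thesis .
    qed
  qed (use zero_weight_nonneg re_bound_ge_1 in auto)
  then show ?thesis
    unfolding exceptional_zeros_def using finite_off_strip by simp
qed

lemma norm_linear_term_le:
  assumes "\<rho> \<in> nz_zeros F - exceptional_zeros"
  shows "norm (linear_term \<rho>) \<le> 2 * re_bound * zero_weight \<rho>"
proof (cases "zero_mult F \<rho> = 0")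
  case False
  then have \<rho>: "Im \<rho> \<noteq> 0" "\<bar>Re \<rho>\<bar> \<le> re_bound" "\<rho> \<noteq> 0"
    using assms abs_Re_le_re_bound unfolding exceptional_zeros_def nz_zeros_def by auto
  have "linear_term \<rho> = complex_of_real (real (zero_mult F \<rho>) * (2 * Re \<rho> / (norm \<rho>)\<^sup>2))"
    unfolding linear_term_def using \<rho> inverse_add_inverse_cnj by simp
  then have "norm (linear_term \<rho>) = real (zero_mult F \<rho>) * (2 * \<bar>Re \<rho>\<bar> / (norm \<rho>)\<^sup>2)"
    by (simp only: norm_of_real) (simp add: abs_mult)
  also have "\<dots> \<le> real (zero_mult F \<rho>) * (2 * re_bound / (norm \<rho>)\<^sup>2)"
    using \<rho>(2) by (intro mult_left_mono divide_right_mono) auto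
  also have "\<dots> = 2 * re_bound * zero_weight \<rho>"
    unfolding zero_weight_def by simp
  finally show ?thesis .
qed (simp add: linear_term_def zero_weight_def)

lemma linear_term_summable: "linear_term summable_on upper_zeros F"
  using summable_on_comparison_cofinite[OF zero_weight_summable finite_exceptional_zeros
      norm_linear_term_le] summable_on_subset_banach upper_zeros_subset by blast

definition factor_deviation :: "real \<Rightarrow> complex \<Rightarrow> real" where
  "factor_deviation R \<rho> =
     (if Im \<rho> = 0 then R / norm \<rho> else (2 * \<bar>Re \<rho>\<bar> * R + R\<^sup>2) / (norm \<rho>)\<^sup>2)"

definition grouped_factor_majorant :: "real \<Rightarrow> complex \<Rightarrow> real" where
  "grouped_factor_majorant R \<rho> = (1 + factor_deviation R \<rho>) ^ zero_mult F \<rho> - 1"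

lemma factor_deviation_nonneg: "R \<ge> 0 \<Longrightarrow> factor_deviation R \<rho> \<ge> 0"
  unfolding factor_deviation_def by auto

lemma grouped_factor_majorant_nonneg: "R \<ge> 0 \<Longrightarrow> grouped_factor_majorant R \<rho> \<ge> 0"
  unfolding grouped_factor_majorant_def using factor_deviation_nonneg[of R \<rho>] by simp

lemma norm_grouped_factor_minus_one_le:
  assumes "\<rho> \<noteq> 0" "norm s \<le> R"
  shows "norm (grouped_factor F s \<rho> - 1) \<le> grouped_factor_majorant R \<rho>"
proof -
  define z where "z = (if Im \<rho> = 0 then 1 - s / \<rho> else (1 - s / \<rho>) * (1 - s / cnj \<rho>))"
  have "norm (z - 1) \<le> factor_deviation R \<rho>"
  proof (cases "Im \<rho> = 0")
    case True
    then show ?thesis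
      unfolding z_def factor_deviation_def using assms
      by (simp add: norm_divide divide_right_mono)
  next
    case False
    have "z - 1 = s * s / (\<rho> * cnj \<rho>) - s * (1 / \<rho> + 1 / cnj \<rho>)"
      unfolding z_def using False assms(1) by (simp add: field_simps)
    also have "\<dots> = s * s / of_real ((norm \<rho>)\<^sup>2) - s * of_real (2 * Re \<rho> / (norm \<rho>)\<^sup>2)"
      by (simp only: inverse_add_inverse_cnj[OF assms(1)] complex_norm_square)
    finally have "norm (z - 1)
        \<le> norm (s * s / of_real ((norm \<rho>)\<^sup>2)) + norm (s * of_real (2 * Re \<rho> / (norm \<rho>)\<^sup>2))"
      by (simp only: norm_triangle_ineq4)
    also have "norm (s * s / of_real ((norm \<rho>)\<^sup>2)) = (norm s)\<^sup>2 / (norm \<rho>)\<^sup>2"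
      by (simp add: norm_mult norm_divide power2_eq_square)
    also have "norm (s * of_real (2 * Re \<rho> / (norm \<rho>)\<^sup>2)) = norm s * (2 * \<bar>Re \<rho>\<bar> / (norm \<rho>)\<^sup>2)"
      by (simp only: norm_mult norm_of_real) (simp add: abs_mult)
    also have "(norm s)\<^sup>2 / (norm \<rho>)\<^sup>2 + norm s * (2 * \<bar>Re \<rho>\<bar> / (norm \<rho>)\<^sup>2)
        \<le> R\<^sup>2 / (norm \<rho>)\<^sup>2 + R * (2 * \<bar>Re \<rho>\<bar> / (norm \<rho>)\<^sup>2)"
      using assms by (intro add_mono divide_right_mono power_mono mult_right_mono) auto
    also have "\<dots> = factor_deviation R \<rho>"
      unfolding factor_deviation_def using False assms(1) by (simp add: field_simps)
    finally show ?thesis .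
  qed
  then have "(1 + norm (z - 1)) ^ zero_mult F \<rho> \<le> (1 + factor_deviation R \<rho>) ^ zero_mult F \<rho>"
    by (intro power_mono) auto
  moreover have "grouped_factor F s \<rho> = z ^ zero_mult F \<rho>"
    unfolding grouped_factor_def z_def by simp
  ultimately show ?thesis
    using norm_power_minus_one_le[of z "zero_mult F \<rho>"]
    unfolding grouped_factor_majorant_def by simp
qed

lemma grouped_factor_majorant_le:
  assumes "R \<ge> 0" "\<rho> \<in> nz_zeros F - exceptional_zeros"
  defines "A \<equiv> 2 * re_bound * R + R\<^sup>2"
  shows "grouped_factor_majorant R \<rho> \<le> A * exp (A * infsum zero_weight (nz_zeros F)) * zero_weight \<rho>"
proof (cases "zero_mult F \<rho> = 0")
  case False
  define m where "m = real (zero_mult F \<rho>)"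
  define D where "D = factor_deviation R \<rho>"
  have \<rho>: "Im \<rho> \<noteq> 0" "\<bar>Re \<rho>\<bar> \<le> re_bound" "\<rho> \<noteq> 0"
    using False assms(2) abs_Re_le_re_bound unfolding exceptional_zeros_def nz_zeros_def by auto
  have "D \<le> A / (norm \<rho>)\<^sup>2"
    unfolding D_def factor_deviation_def A_def using \<rho> assms(1)
    by (auto intro!: divide_right_mono mult_right_mono)
  then have mD: "m * D \<le> A * zero_weight \<rho>"
    using mult_left_mono[of D "A / (norm \<rho>)\<^sup>2" m] unfolding m_def zero_weight_def
    by (simp add: field_simps)
  have "zero_weight \<rho> \<le> infsum zero_weight (nz_zeros F)"
    using finite_sum_le_infsum[OF zero_weight_summable, of "{\<rho>}"] assms(2) zero_weight_nonneg by simp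
  moreover have A: "A \<ge> 0"
    unfolding A_def using assms(1) re_bound_ge_1 by simp
  ultimately have mD_total: "m * D \<le> A * infsum zero_weight (nz_zeros F)"
    using mD mult_left_mono by (smt (verit))
  have "(1 + D) ^ zero_mult F \<rho> \<le> exp D ^ zero_mult F \<rho>"
    using factor_deviation_nonneg[OF assms(1)] unfolding D_def
    by (intro power_mono) (auto simp: add.commute exp_ge_add_one_self)
  then have "grouped_factor_majorant R \<rho> \<le> exp (m * D) - 1"
    unfolding grouped_factor_majorant_def D_def m_def by (simp add: exp_of_nat_mult)
  also have "\<dots> \<le> m * D * exp (m * D)"
    using factor_deviation_nonneg[OF assms(1)] unfolding D_def m_def
    by (intro exp_minus_one_le_mult_exp) simp
  also have "\<dots> \<le> A * zero_weight \<rho> * exp (A * infsum zero_weight (nz_zeros F))"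
    by (rule mult_mono) (use mD mD_total A zero_weight_nonneg[of \<rho>] in auto)
  finally show ?thesis
    by (simp add: mult_ac)
qed (simp add: grouped_factor_majorant_def zero_weight_def)

lemma grouped_factor_majorant_summable:
  assumes "R \<ge> 0"
  shows "grouped_factor_majorant R summable_on upper_zeros F"
proof -
  define A where "A = 2 * re_bound * R + R\<^sup>2"
  have "grouped_factor_majorant R summable_on nz_zeros F"
  proof (rule summable_on_comparison_cofinite[OF zero_weight_summable finite_exceptional_zeros])
    fix \<rho>
    assume "\<rho> \<in> nz_zeros F - exceptional_zeros"
    then show "norm (grouped_factor_majorant R \<rho>)
        \<le> A * exp (A * infsum zero_weight (nz_zeros F)) * zero_weight \<rho>"
      using grouped_factor_majorant_le[OF assms] grouped_factor_majorant_nonneg[OF assms]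
      unfolding A_def by simp
  qed
  then show ?thesis
    using summable_on_subset_banach upper_zeros_subset by blast
qed

lemma norm_grouped_factor_minus_one_summable:
  "(\<lambda>\<rho>. norm (grouped_factor F s \<rho> - 1)) summable_on upper_zeros F"
  using norm_grouped_factor_minus_one_le[of _ s "norm s"]
  by (intro summable_on_comparison_test[OF grouped_factor_majorant_summable[of "norm s"]])
    (auto simp: upper_zeros_def)

section \<open>Comparing the grouped factors at \<open>\<sigma>\<close> and \<open>1 - \<sigma>\<close>\<close>

definition pair_size :: "complex \<Rightarrow> nat" where
  "pair_size \<rho> = (if Im \<rho> = 0 then 1 else 2)"

definition shifted_weight :: "real \<Rightarrow> complex \<Rightarrow> real" where
  "shifted_weight \<sigma> \<rho> = real (zero_mult F \<rho>) / (\<sigma>\<^sup>2 + (norm \<rho>)\<^sup>2)"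

definition reflection_threshold :: real where
  "reflection_threshold =
     max (max (2 * (1 - \<sigma>0)) (2 * re_bound)) (\<Sum>\<rho>\<in>off_strip. 2 * (norm \<rho> + 1))"

text \<open>Lower bound for \<open>|G(1 - \<sigma>) / G(\<sigma>)|\<close>, \<open>G\<close> the grouped factor at \<open>\<rho>\<close>.\<close>
definition reflection_weight :: "real \<Rightarrow> complex \<Rightarrow> real" where
  "reflection_weight \<sigma> \<rho> =
     (if \<rho> \<in> off_strip then (1/16) ^ zero_mult F \<rho>
      else exp (- (20 * re_bound * \<sigma> * shifted_weight \<sigma> \<rho>)))"

definition off_strip_const :: real where
  "off_strip_const = (\<Prod>\<rho>\<in>off_strip \<inter> upper_zeros F. (1/16) ^ zero_mult F \<rho>)"

lemma reflection_weight_nonneg: "reflection_weight \<sigma> \<rho> \<ge> 0"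
  unfolding reflection_weight_def by simp

lemma off_strip_const_pos: "off_strip_const > 0"
  unfolding off_strip_const_def by (intro prod_pos) auto

lemma shifted_weight_nonneg: "shifted_weight \<sigma> \<rho> \<ge> 0"
  unfolding shifted_weight_def by simp

lemma shifted_weight_le: "\<rho> \<noteq> 0 \<Longrightarrow> shifted_weight \<sigma> \<rho> \<le> zero_weight \<rho>"
  unfolding shifted_weight_def zero_weight_def
  by (intro divide_left_mono mult_pos_pos add_nonneg_pos) auto

lemma shifted_weight_summable: "shifted_weight \<sigma> summable_on nz_zeros F"
  using shifted_weight_le shifted_weight_nonneg
  by (intro summable_on_comparison_test[OF zero_weight_summable]) (auto simp: nz_zeros_def)

lemma norm_grouped_factor_of_real:
  assumes "\<rho> \<noteq> 0"
  shows "norm (grouped_factor F (of_real x) \<rho>)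
           = (norm (\<rho> - of_real x) / norm \<rho>) ^ (pair_size \<rho> * zero_mult F \<rho>)"
proof -
  have "1 - of_real x / \<rho> = (\<rho> - of_real x) / \<rho>"
    using assms by (simp add: diff_divide_distrib)
  then have "norm (1 - of_real x / \<rho>) = norm (\<rho> - of_real x) / norm \<rho>"
    by (simp add: norm_divide)
  moreover have "norm (1 - of_real x / cnj \<rho>) = norm (1 - of_real x / \<rho>)"
    by (metis complex_cnj_complex_of_real complex_cnj_diff complex_cnj_divide complex_cnj_one
        complex_mod_cnj)
  ultimately show ?thesis
    unfolding grouped_factor_def pair_size_def
    by (simp add: norm_mult norm_power power_mult power2_eq_square)
qed

lemma norm_grouped_factor_ge:
  fixes x y :: real
  assumes "\<rho> \<noteq> 0" "norm (\<rho> - of_real x) > 0"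
  defines "q \<equiv> norm (\<rho> - of_real y) / norm (\<rho> - of_real x)"
  shows "(min 1 q) ^ (2 * zero_mult F \<rho>) * norm (grouped_factor F (of_real x) \<rho>)
           \<le> norm (grouped_factor F (of_real y) \<rho>)"
proof -
  define n where "n = pair_size \<rho> * zero_mult F \<rho>"
  have qr: "norm (\<rho> - of_real y) / norm \<rho> = q * (norm (\<rho> - of_real x) / norm \<rho>)"
    unfolding q_def using assms(2) by simp
  have "norm (grouped_factor F (of_real y) \<rho>) = (q * (norm (\<rho> - of_real x) / norm \<rho>)) ^ n"
    unfolding norm_grouped_factor_of_real[OF assms(1)] qr n_def ..
  also have "\<dots> = q ^ n * norm (grouped_factor F (of_real x) \<rho>)"
    unfolding power_mult_distrib norm_grouped_factor_of_real[OF assms(1)] n_def ..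
  finally have "norm (grouped_factor F (of_real y) \<rho>) = q ^ n * norm (grouped_factor F (of_real x) \<rho>)" .
  moreover have "(min 1 q) ^ (2 * zero_mult F \<rho>) \<le> (min 1 q) ^ n"
    unfolding n_def pair_size_def q_def by (intro power_decreasing) auto
  moreover have "(min 1 q) ^ n \<le> q ^ n"
    unfolding q_def by (intro power_mono) auto
  ultimately show ?thesis
    by (simp add: mult_right_mono)
qed

lemma reflection_quotient_strip:
  fixes \<sigma> :: real
  assumes "F \<rho> = 0" "\<rho> \<notin> off_strip" "\<sigma> \<ge> 2 * (1 - \<sigma>0)" "\<sigma> \<ge> 2 * re_bound"
  defines "q \<equiv> norm (\<rho> - of_real (1 - \<sigma>)) / norm (\<rho> - of_real \<sigma>)"
  shows "norm (\<rho> - of_real \<sigma>) > 0"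
    and "exp (- (20 * re_bound * \<sigma> * shifted_weight \<sigma> \<rho>)) \<le> (min 1 q) ^ (2 * zero_mult F \<rho>)"
proof -
  define A where "A = (Re \<rho> - (1 - \<sigma>))\<^sup>2 + (Im \<rho>)\<^sup>2"
  define B where "B = (Re \<rho> - \<sigma>)\<^sup>2 + (Im \<rho>)\<^sup>2"
  have strip: "\<sigma>0 < Re \<rho>" "Re \<rho> < 1/2"
    using assms(1,2) unfolding off_strip_def by auto
  have "\<bar>\<sigma>0\<bar> + 1 \<le> re_bound"
    unfolding re_bound_def by simp
  note AB = reflection_sq_dist_strip[OF strip this assms(3,4), of "Im \<rho>", folded A_def B_def]
  have A: "(norm (\<rho> - of_real (1 - \<sigma>)))\<^sup>2 = A" and B: "(norm (\<rho> - of_real \<sigma>))\<^sup>2 = B"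
    unfolding A_def B_def by (simp_all add: cmod_power2)
  then have "(norm (\<rho> - of_real \<sigma>))\<^sup>2 > 0"
    using AB(1,2) by linarith
  then show B_pos: "norm (\<rho> - of_real \<sigma>) > 0"
    using norm_ge_zero[of "\<rho> - of_real \<sigma>"] by (metis power_zero_numeral less_le)
  have "norm (\<rho> - of_real (1 - \<sigma>)) \<le> norm (\<rho> - of_real \<sigma>)"
    by (rule power2_le_imp_le) (use A B AB(2) in simp_all)
  then have "q \<le> 1"
    unfolding q_def using B_pos by simp
  have q2: "q\<^sup>2 = A / B"
    unfolding q_def power_divide A B ..
  define S where "S = \<sigma>\<^sup>2 + (norm \<rho>)\<^sup>2"
  have "S \<le> 5 * A" "\<sigma> > 0"
    using AB(4) assms(4) re_bound_ge_1 unfolding S_def by (simp_all add: cmod_power2)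
  then have "(B - A) / A \<le> (4 * re_bound * \<sigma>) / (S / 5)"
    using AB re_bound_ge_1 by (intro frac_le) (auto simp: S_def add_pos_nonneg)
  also have "\<dots> = 20 * re_bound * \<sigma> / S"
    by simp
  finally have "exp (- (20 * re_bound * \<sigma> / S)) \<le> exp (- ((B - A) / A))"
    by simp
  also have "\<dots> \<le> q\<^sup>2"
    unfolding q2 using AB(1,2) by (intro exp_neg_le_divide) auto
  finally have "exp (- (20 * re_bound * \<sigma> / S)) ^ zero_mult F \<rho> \<le> (q\<^sup>2) ^ zero_mult F \<rho>"
    by (intro power_mono) auto
  moreover have "exp (- (20 * re_bound * \<sigma> / S)) ^ zero_mult F \<rho>
      = exp (- (20 * re_bound * \<sigma> * shifted_weight \<sigma> \<rho>))"
    unfolding shifted_weight_def S_def exp_of_nat_mult[symmetric] by (simp add: field_simps)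
  moreover have "(q\<^sup>2) ^ zero_mult F \<rho> = (min 1 q) ^ (2 * zero_mult F \<rho>)"
    using \<open>q \<le> 1\<close> by (simp add: power_mult)
  ultimately show "exp (- (20 * re_bound * \<sigma> * shifted_weight \<sigma> \<rho>)) \<le> (min 1 q) ^ (2 * zero_mult F \<rho>)"
    by simp
qed

lemma reflection_weight_le:
  assumes "\<rho> \<in> upper_zeros F" "\<sigma> \<ge> reflection_threshold"
  shows "reflection_weight \<sigma> \<rho> * norm (grouped_factor F (of_real \<sigma>) \<rho>)
           \<le> norm (grouped_factor F (of_real (1 - \<sigma>)) \<rho>)"
proof -
  have \<rho>: "\<rho> \<noteq> 0" "F \<rho> = 0"
    using assms(1) unfolding upper_zeros_def by auto
  define q where "q = norm (\<rho> - of_real (1 - \<sigma>)) / norm (\<rho> - of_real \<sigma>)"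
  have "norm (\<rho> - of_real \<sigma>) > 0 \<and> reflection_weight \<sigma> \<rho> \<le> (min 1 q) ^ (2 * zero_mult F \<rho>)"
  proof (cases "\<rho> \<in> off_strip")
    case True
    have "2 * (norm \<rho> + 1) \<le> (\<Sum>\<rho>\<in>off_strip. 2 * (norm \<rho> + 1))"
      by (rule member_le_sum) (use True finite_off_strip in auto)
    then have far: "\<sigma> \<ge> 2 * (norm \<rho> + 1)"
      using assms(2) unfolding reflection_threshold_def by linarith
    have "((1/4) ^ 2) ^ zero_mult F \<rho> \<le> (min 1 q) ^ (2 * zero_mult F \<rho>)"
      unfolding power_mult[symmetric] q_def using reflection_quotient_far(2)[OF far]
      by (intro power_mono) auto
    then show ?thesis
      using True reflection_quotient_far(1)[OF far] unfolding reflection_weight_def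
      by (simp add: power2_eq_square)
  next
    case False
    then show ?thesis
      using reflection_quotient_strip[OF \<rho>(2) False, of \<sigma>] assms(2)
      unfolding reflection_weight_def q_def reflection_threshold_def by auto
  qed
  then show ?thesis
    using norm_grouped_factor_ge[OF \<rho>(1), of \<sigma> "1 - \<sigma>"]
    unfolding q_def by (meson mult_right_mono norm_ge_zero order_trans)
qed

lemma prod_reflection_weight_ge:
  assumes Y: "finite Y" "Y \<subseteq> upper_zeros F" and "\<sigma> \<ge> 0"
  shows "off_strip_const * exp (- (20 * re_bound * \<sigma> * infsum (shifted_weight \<sigma>) (nz_zeros F)))
           \<le> (\<Prod>\<rho>\<in>Y. reflection_weight \<sigma> \<rho>)"
proof -
  have "Y \<inter> off_strip \<subseteq> off_strip \<inter> upper_zeros F"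
    using Y by auto
  then have "off_strip_const
      = (\<Prod>\<rho>\<in>off_strip \<inter> upper_zeros F - Y \<inter> off_strip. (1/16) ^ zero_mult F \<rho>) *
        (\<Prod>\<rho>\<in>Y \<inter> off_strip. (1/16) ^ zero_mult F \<rho>)"
    unfolding off_strip_const_def using finite_off_strip by (intro prod.subset_diff) auto
  also have "\<dots> \<le> (\<Prod>\<rho>\<in>Y \<inter> off_strip. (1/16) ^ zero_mult F \<rho>)"
    by (intro mult_left_le_one_le prod_le_1 prod_nonneg) (auto simp: power_le_one)
  also have "\<dots> = (\<Prod>\<rho>\<in>Y \<inter> off_strip. reflection_weight \<sigma> \<rho>)"
    unfolding reflection_weight_def by (rule prod.cong) auto
  finally have on: "off_strip_const \<le> (\<Prod>\<rho>\<in>Y \<inter> off_strip. reflection_weight \<sigma> \<rho>)" .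
  have "(\<Sum>\<rho>\<in>Y - off_strip. shifted_weight \<sigma> \<rho>) \<le> infsum (shifted_weight \<sigma>) (nz_zeros F)"
    using Y upper_zeros_subset shifted_weight_nonneg
    by (intro finite_sum_le_infsum[OF shifted_weight_summable]) auto
  then have "exp (- (20 * re_bound * \<sigma> * infsum (shifted_weight \<sigma>) (nz_zeros F)))
      \<le> exp (\<Sum>\<rho>\<in>Y - off_strip. - (20 * re_bound * \<sigma> * shifted_weight \<sigma> \<rho>))"
    using \<open>\<sigma> \<ge> 0\<close> re_bound_ge_1
    by (simp add: sum_negf sum_distrib_left[symmetric] mult_left_mono)
  also have "\<dots> = (\<Prod>\<rho>\<in>Y - off_strip. reflection_weight \<sigma> \<rho>)"
    unfolding exp_sum[OF finite_Diff[OF Y(1)]] reflection_weight_def by (rule prod.cong) auto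
  finally have off: "exp (- (20 * re_bound * \<sigma> * infsum (shifted_weight \<sigma>) (nz_zeros F)))
      \<le> (\<Prod>\<rho>\<in>Y - off_strip. reflection_weight \<sigma> \<rho>)" .
  show ?thesis
    unfolding prod.Int_Diff[OF Y(1), of _ off_strip]
    using on off off_strip_const_pos
    by (intro mult_mono) (auto intro: prod_nonneg simp: reflection_weight_def)
qed

lemma prod_grouped_factor_reflection_ge:
  assumes Y: "finite Y" "Y \<subseteq> upper_zeros F" and \<sigma>: "\<sigma> \<ge> reflection_threshold"
  shows "off_strip_const * exp (- (20 * re_bound * \<sigma> * infsum (shifted_weight \<sigma>) (nz_zeros F)))
             * norm (\<Prod>\<rho>\<in>Y. grouped_factor F (of_real \<sigma>) \<rho>)
           \<le> norm (\<Prod>\<rho>\<in>Y. grouped_factor F (of_real (1 - \<sigma>)) \<rho>)"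
proof -
  have "\<sigma> \<ge> 0"
    using \<sigma> re_bound_ge_1 unfolding reflection_threshold_def by linarith
  have "(\<Prod>\<rho>\<in>Y. reflection_weight \<sigma> \<rho>) * (\<Prod>\<rho>\<in>Y. norm (grouped_factor F (of_real \<sigma>) \<rho>))
      \<le> (\<Prod>\<rho>\<in>Y. norm (grouped_factor F (of_real (1 - \<sigma>)) \<rho>))"
    unfolding prod.distrib[symmetric]
  proof (rule prod_mono)
    fix \<rho>
    assume "\<rho> \<in> Y"
    then have "\<rho> \<in> upper_zeros F"
      using Y by blast
    then show "0 \<le> reflection_weight \<sigma> \<rho> * norm (grouped_factor F (of_real \<sigma>) \<rho>) \<and>
        reflection_weight \<sigma> \<rho> * norm (grouped_factor F (of_real \<sigma>) \<rho>)
          \<le> norm (grouped_factor F (of_real (1 - \<sigma>)) \<rho>)"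
      using reflection_weight_le[OF _ \<sigma>] reflection_weight_nonneg
      by (meson mult_nonneg_nonneg norm_ge_zero)
  qed
  then show ?thesis
    using mult_right_mono[OF prod_reflection_weight_ge[OF Y \<open>\<sigma> \<ge> 0\<close>],
        of "\<Prod>\<rho>\<in>Y. norm (grouped_factor F (of_real \<sigma>) \<rho>)"]
    unfolding prod_norm by (meson order_trans norm_ge_zero)
qed

text \<open>The total loss \<open>\<Sum>\<^sub>\<rho> m\<^sub>\<rho> / (\<sigma>\<^sup>2 + |\<rho>|\<^sup>2)\<close> tends to \<open>0\<close>: the tail is uniformly small
  by summability of \<open>m\<^sub>\<rho> / |\<rho>|\<^sup>2\<close>, and the finitely many remaining terms are \<open>O(1/\<sigma>\<^sup>2)\<close>.\<close>
lemma shifted_weight_sum_small: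
  assumes "\<epsilon> > 0"
  shows "\<forall>\<^sub>F \<sigma> in at_top. infsum (shifted_weight \<sigma>) (nz_zeros F) \<le> \<epsilon>"
proof -
  obtain Y0 where Y0: "finite Y0" "Y0 \<subseteq> nz_zeros F"
    and tail: "\<And>V. finite V \<Longrightarrow> V \<subseteq> nz_zeros F - Y0 \<Longrightarrow> sum zero_weight V \<le> \<epsilon> / 2"
    using summable_on_nonneg_tail_le[OF zero_weight_summable zero_weight_nonneg, of "\<epsilon> / 2"] assms
    by auto
  define S where "S = (\<Sum>\<rho>\<in>Y0. real (zero_mult F \<rho>))"
  have "infsum (shifted_weight \<sigma>) (nz_zeros F) \<le> \<epsilon>" if \<sigma>: "\<sigma> \<ge> max 1 (2 * S / \<epsilon>)" for \<sigma>
  proof (rule infsum_le_finite_sums[OF shifted_weight_summable])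
    fix Z
    assume Z: "finite Z" "Z \<subseteq> nz_zeros F"
    have "\<sigma>\<^sup>2 \<ge> \<sigma>"
      using \<sigma> by (simp add: power2_eq_square)
    then have "2 * S / \<epsilon> \<le> \<sigma>\<^sup>2"
      using \<sigma> by linarith
    then have "S \<le> \<epsilon> / 2 * \<sigma>\<^sup>2"
      using assms by (simp add: field_simps)
    then have "S / \<sigma>\<^sup>2 \<le> \<epsilon> / 2"
      using \<sigma> by (simp add: field_simps)
    have "sum (shifted_weight \<sigma>) (Z \<inter> Y0) \<le> (\<Sum>\<rho>\<in>Z \<inter> Y0. real (zero_mult F \<rho>) / \<sigma>\<^sup>2)"
      unfolding shifted_weight_def using \<sigma>
      by (intro sum_mono divide_left_mono) (auto simp: add_pos_nonneg)
    also have "\<dots> \<le> (\<Sum>\<rho>\<in>Y0. real (zero_mult F \<rho>) / \<sigma>\<^sup>2)"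
      using Y0 by (intro sum_mono2) auto
    also have "\<dots> = S / \<sigma>\<^sup>2"
      unfolding S_def by (simp add: sum_divide_distrib)
    finally have "sum (shifted_weight \<sigma>) (Z \<inter> Y0) \<le> \<epsilon> / 2"
      using \<open>S / \<sigma>\<^sup>2 \<le> \<epsilon> / 2\<close> by linarith
    moreover have "sum (shifted_weight \<sigma>) (Z - Y0) \<le> sum zero_weight (Z - Y0)"
      using Z shifted_weight_le by (intro sum_mono) (auto simp: nz_zeros_def)
    moreover have "sum zero_weight (Z - Y0) \<le> \<epsilon> / 2"
      using Z by (intro tail) auto
    ultimately show "sum (shifted_weight \<sigma>) Z \<le> \<epsilon>"
      unfolding sum.Int_Diff[OF Z(1), of _ Y0] by linarith
  qed
  then show ?thesis
    unfolding eventually_at_top_linorder by blast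
qed

end

section \<open>The regrouped Hadamard product\<close>

locale hadamard_genus_one = real_entire_zeros_in_strip F \<sigma>0 for F \<sigma>0 +
  fixes a b :: complex and m0 :: nat and Q :: "complex \<Rightarrow> complex"
  assumes Q_prod: "\<And>s. set_prod_conv (\<lambda>\<rho>. ((1 - s / \<rho>) * exp (s / \<rho>)) ^ zero_mult F \<rho>) (nz_zeros F) (Q s)"
    and F_eq: "\<And>s. F s = exp (a + b * s) * s ^ m0 * Q s"
begin

definition hadamard_factor :: "complex \<Rightarrow> complex \<Rightarrow> complex" where
  "hadamard_factor s \<rho> = ((1 - s / \<rho>) * exp (s / \<rho>)) ^ zero_mult F \<rho>"

definition linear_sum :: complex where
  "linear_sum = infsum linear_term (upper_zeros F)"

definition grouped_prod :: "complex \<Rightarrow> complex" where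
  "grouped_prod s = Q s * exp (- (s * linear_sum))"

definition slope :: complex where
  "slope = b + linear_sum"

lemma hadamard_factor_pair:
  assumes "\<rho> \<noteq> 0"
  shows "hadamard_factor s \<rho> * (if Im \<rho> = 0 then 1 else hadamard_factor s (cnj \<rho>))
           = grouped_factor F s \<rho> * exp (s * linear_term \<rho>)"
proof (cases "Im \<rho> = 0")
  case True
  have "exp (s * linear_term \<rho>) = exp (of_nat (zero_mult F \<rho>) * (s / \<rho>))"
    unfolding linear_term_def using True by (simp add: field_simps)
  also have "\<dots> = exp (s / \<rho>) ^ zero_mult F \<rho>"
    by (rule exp_of_nat_mult)
  finally show ?thesis
    unfolding hadamard_factor_def grouped_factor_def using True
    by (simp add: exp_of_nat_mult power_mult_distrib)
next
  case False
  have "exp (s * linear_term \<rho>) = exp (of_nat (zero_mult F \<rho>) * (s / \<rho> + s / cnj \<rho>))"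
    unfolding linear_term_def using False by (simp add: field_simps)
  also have "\<dots> = (exp (s / \<rho>) * exp (s / cnj \<rho>)) ^ zero_mult F \<rho>"
    by (simp add: exp_of_nat_mult exp_add)
  finally show ?thesis
    unfolding hadamard_factor_def grouped_factor_def zero_mult_cnj using False
    by (simp add: power_mult_distrib[symmetric] mult_ac)
qed

lemma prod_hadamard_factor_cnj_closure:
  assumes Y: "finite Y" "Y \<subseteq> upper_zeros F"
  shows "(\<Prod>\<rho>\<in>Y \<union> cnj ` Y. hadamard_factor s \<rho>)
           = (\<Prod>\<rho>\<in>Y. grouped_factor F s \<rho>) * exp (s * sum linear_term Y)"
proof -
  define Y' where "Y' = {\<rho>\<in>Y. Im \<rho> \<noteq> 0}"
  have "cnj ` Y \<subseteq> Y \<union> cnj ` Y'"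
  proof
    fix z
    assume "z \<in> cnj ` Y"
    then obtain x where x: "x \<in> Y" "z = cnj x"
      by blast
    show "z \<in> Y \<union> cnj ` Y'"
    proof (cases "Im x = 0")
      case True
      then have "z = x"
        using x(2) by (simp add: complex_eq_iff)
      then show ?thesis
        using x(1) by simp
    qed (use x in \<open>auto simp: Y'_def\<close>)
  qed
  then have "Y \<union> cnj ` Y = Y \<union> cnj ` Y'"
    unfolding Y'_def by blast
  moreover have "Y \<inter> cnj ` Y' = {}"
  proof -
    have "Im z \<ge> 0" if "z \<in> Y" for z
      using that Y unfolding upper_zeros_def by auto
    moreover have "Im z < 0" if "z \<in> cnj ` Y'" for z
      using that Y unfolding Y'_def upper_zeros_def by fastforce
    ultimately show ?thesis
      by fastforce
  qed
  ultimately have "(\<Prod>\<rho>\<in>Y \<union> cnj ` Y. hadamard_factor s \<rho>)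
      = (\<Prod>\<rho>\<in>Y. hadamard_factor s \<rho>) * (\<Prod>\<rho>\<in>Y'. hadamard_factor s (cnj \<rho>))"
    using Y(1) prod.reindex[of cnj Y' "hadamard_factor s"]
    by (simp add: prod.union_disjoint Y'_def inj_on_def)
  also have "(\<Prod>\<rho>\<in>Y'. hadamard_factor s (cnj \<rho>))
      = (\<Prod>\<rho>\<in>Y. if Im \<rho> = 0 then 1 else hadamard_factor s (cnj \<rho>))"
    unfolding Y'_def prod.inter_filter[OF Y(1)] by (rule prod.cong) auto
  also have "(\<Prod>\<rho>\<in>Y. hadamard_factor s \<rho>) * \<dots>
      = (\<Prod>\<rho>\<in>Y. grouped_factor F s \<rho> * exp (s * linear_term \<rho>))"
    unfolding prod.distrib[symmetric] using Y
    by (intro prod.cong refl hadamard_factor_pair) (auto simp: upper_zeros_def)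
  also have "\<dots> = (\<Prod>\<rho>\<in>Y. grouped_factor F s \<rho>) * exp (s * sum linear_term Y)"
    by (simp add: prod.distrib exp_sum[OF Y(1)] sum_distrib_left)
  finally show ?thesis .
qed

lemma filterlim_cnj_closure:
  "filterlim (\<lambda>Y. Y \<union> cnj ` Y) (finite_subsets_at_top (nz_zeros F))
     (finite_subsets_at_top (upper_zeros F))"
proof (rule filterlim_finite_subsets_at_topI)
  show "finite (Y \<union> cnj ` Y) \<and> Y \<union> cnj ` Y \<subseteq> nz_zeros F"
    if "finite Y" "Y \<subseteq> upper_zeros F" for Y
    using that F_cnj unfolding upper_zeros_def nz_zeros_def by auto
next
  fix X
  assume X: "finite X" "X \<subseteq> nz_zeros F"
  define Y0 where "Y0 = (X \<inter> upper_zeros F) \<union> cnj ` (X - upper_zeros F)"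
  have "Y0 \<subseteq> upper_zeros F"
    using X F_cnj unfolding Y0_def upper_zeros_def nz_zeros_def by auto
  moreover have "finite Y0"
    unfolding Y0_def using X(1) by simp
  moreover have "X \<subseteq> Y \<union> cnj ` Y" if "Y0 \<subseteq> Y" for Y
  proof
    fix x
    assume "x \<in> X"
    show "x \<in> Y \<union> cnj ` Y"
    proof (cases "x \<in> upper_zeros F")
      case True
      then have "x \<in> Y0"
        using \<open>x \<in> X\<close> unfolding Y0_def by blast
      then show ?thesis
        using that by blast
    next
      case False
      then have "cnj x \<in> Y0"
        using \<open>x \<in> X\<close> unfolding Y0_def by blast
      then show ?thesis
        using that by (metis UnI2 complex_cnj_cnj image_eqI subsetD)
    qed
  qed
  ultimately show "\<exists>Y0. finite Y0 \<and> Y0 \<subseteq> upper_zeros F \<and>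
      (\<forall>Y. finite Y \<and> Y0 \<subseteq> Y \<and> Y \<subseteq> upper_zeros F \<longrightarrow> X \<subseteq> Y \<union> cnj ` Y)"
    by (intro exI[of _ Y0]) simp
qed

lemma grouped_prod_tendsto:
  "((\<lambda>Y. \<Prod>\<rho>\<in>Y. grouped_factor F s \<rho>) \<longlongrightarrow> grouped_prod s) (finite_subsets_at_top (upper_zeros F))"
proof -
  have "((\<lambda>X. \<Prod>\<rho>\<in>X. hadamard_factor s \<rho>) \<longlongrightarrow> Q s) (finite_subsets_at_top (nz_zeros F))"
    using Q_prod[of s] unfolding set_prod_conv_def hadamard_factor_def .
  then have "((\<lambda>Y. \<Prod>\<rho>\<in>Y \<union> cnj ` Y. hadamard_factor s \<rho>) \<longlongrightarrow> Q s) (finite_subsets_at_top (upper_zeros F))"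
    using filterlim_compose filterlim_cnj_closure by blast
  moreover have "(sum linear_term \<longlongrightarrow> linear_sum) (finite_subsets_at_top (upper_zeros F))"
    using has_sum_infsum[OF linear_term_summable] unfolding has_sum_def linear_sum_def .
  ultimately have "((\<lambda>Y. (\<Prod>\<rho>\<in>Y \<union> cnj ` Y. hadamard_factor s \<rho>) * exp (- (s * sum linear_term Y)))
      \<longlongrightarrow> grouped_prod s) (finite_subsets_at_top (upper_zeros F))"
    unfolding grouped_prod_def by (intro tendsto_intros)
  moreover have "\<forall>\<^sub>F Y in finite_subsets_at_top (upper_zeros F).
      (\<Prod>\<rho>\<in>Y \<union> cnj ` Y. hadamard_factor s \<rho>) * exp (- (s * sum linear_term Y))
        = (\<Prod>\<rho>\<in>Y. grouped_factor F s \<rho>)"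
  proof (rule eventually_finite_subsets_at_top_weakI)
    fix Y
    assume "finite Y" "Y \<subseteq> upper_zeros F"
    then show "(\<Prod>\<rho>\<in>Y \<union> cnj ` Y. hadamard_factor s \<rho>) * exp (- (s * sum linear_term Y))
        = (\<Prod>\<rho>\<in>Y. grouped_factor F s \<rho>)"
      unfolding prod_hadamard_factor_cnj_closure[OF \<open>finite Y\<close> \<open>Y \<subseteq> upper_zeros F\<close>]
      by (simp add: exp_minus field_simps)
  qed
  ultimately show ?thesis
    using tendsto_cong by force
qed

lemma F_eq_grouped_prod: "F s = exp a * s ^ m0 * exp (slope * s) * grouped_prod s"
proof -
  have "Q s = grouped_prod s * exp (s * linear_sum)"
    unfolding grouped_prod_def by (simp add: exp_minus field_simps)
  then have "F s = exp a * exp (b * s) * s ^ m0 * (grouped_prod s * exp (s * linear_sum))"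
    using F_eq[of s] by (simp add: exp_add)
  moreover have "exp (slope * s) = exp (b * s) * exp (s * linear_sum)"
    unfolding slope_def by (simp add: exp_add[symmetric] algebra_simps)
  ultimately show ?thesis
    by (simp only: mult_ac)
qed

lemma uniform_limit_grouped_prod:
  assumes "compact K"
  shows "uniform_limit K (\<lambda>X s. \<Prod>\<rho>\<in>X. grouped_factor F s \<rho>) grouped_prod
           (finite_subsets_at_top (upper_zeros F))"
proof -
  obtain R where R: "R \<ge> 0" "\<And>s. s \<in> K \<Longrightarrow> norm s \<le> R"
    using compact_imp_bounded[OF assms] unfolding bounded_iff by (meson norm_ge_zero order_trans)
  show ?thesis
    using R norm_grouped_factor_minus_one_le grouped_factor_majorant_nonneg
    by (intro uniform_limit_prod_finite_subsets[OF grouped_prod_tendsto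
          grouped_factor_majorant_summable[OF R(1)]]) (auto simp: upper_zeros_def)
qed

lemma grouped_factor_of_real_real: "grouped_factor F (of_real x) \<rho> \<in> \<real>"
proof -
  have "(1 - of_real x / \<rho>) * (1 - of_real x / cnj \<rho>) = of_real ((norm (1 - of_real x / \<rho>))\<^sup>2)"
    unfolding complex_norm_square by simp
  moreover have "1 - of_real x / \<rho> \<in> \<real>" if "Im \<rho> = 0"
    using that by (simp add: complex_is_Real_iff Im_divide)
  ultimately show ?thesis
    unfolding grouped_factor_def by (auto intro: Reals_power)
qed

lemma grouped_prod_of_real_real: "grouped_prod (of_real x) \<in> \<real>"
proof -
  have "((\<lambda>Y. Im (\<Prod>\<rho>\<in>Y. grouped_factor F (of_real x) \<rho>)) \<longlongrightarrow> Im (grouped_prod (of_real x)))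
          (finite_subsets_at_top (upper_zeros F))"
    by (intro tendsto_Im grouped_prod_tendsto)
  moreover have "Im (\<Prod>\<rho>\<in>Y. grouped_factor F (of_real x) \<rho>) = 0" for Y
    using prod_in_Reals[of Y "grouped_factor F (of_real x)"] grouped_factor_of_real_real
    by (simp add: complex_is_Real_iff)
  ultimately have "((\<lambda>Y. 0) \<longlongrightarrow> Im (grouped_prod (of_real x))) (finite_subsets_at_top (upper_zeros F))"
    by simp
  then show ?thesis
    by (simp add: tendsto_const_iff complex_is_Real_iff)
qed

lemma Im_slope_eq_0:
  assumes "\<forall>\<^sub>F \<sigma> in at_top. F (of_real \<sigma>) \<noteq> 0"
  shows "Im slope = 0"
proof -
  obtain X where X: "\<And>\<sigma>. \<sigma> \<ge> X \<Longrightarrow> F (of_real \<sigma>) \<noteq> 0"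
    using assms unfolding eventually_at_top_linorder by blast
  show ?thesis
  proof (rule Im_eq_0_if_exp_real)
    fix x
    assume "x \<ge> max X 1"
    then have "F (of_real x) \<noteq> 0" "x \<noteq> 0"
      using X by auto
    then have "exp (a + slope * of_real x) = F (of_real x) / (of_real x ^ m0 * grouped_prod (of_real x))"
      using F_eq_grouped_prod[of "of_real x"] by (auto simp: exp_add field_simps)
    then show "exp (a + slope * of_real x) \<in> \<real>"
      using real_on_real[of x] grouped_prod_of_real_real[of x] by auto
  qed
qed

lemma norm_grouped_prod_reflection_ge:
  assumes "\<sigma> \<ge> reflection_threshold"
  shows "off_strip_const * exp (- (20 * re_bound * \<sigma> * infsum (shifted_weight \<sigma>) (nz_zeros F)))
             * norm (grouped_prod (of_real \<sigma>))
           \<le> norm (grouped_prod (of_real (1 - \<sigma>)))"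
proof (rule tendsto_le)
  show "((\<lambda>Y. norm (\<Prod>\<rho>\<in>Y. grouped_factor F (of_real (1 - \<sigma>)) \<rho>))
          \<longlongrightarrow> norm (grouped_prod (of_real (1 - \<sigma>)))) (finite_subsets_at_top (upper_zeros F))"
    by (intro tendsto_norm grouped_prod_tendsto)
  show "((\<lambda>Y. off_strip_const * exp (- (20 * re_bound * \<sigma> * infsum (shifted_weight \<sigma>) (nz_zeros F)))
            * norm (\<Prod>\<rho>\<in>Y. grouped_factor F (of_real \<sigma>) \<rho>))
          \<longlongrightarrow> off_strip_const * exp (- (20 * re_bound * \<sigma> * infsum (shifted_weight \<sigma>) (nz_zeros F)))
            * norm (grouped_prod (of_real \<sigma>))) (finite_subsets_at_top (upper_zeros F))"
    by (intro tendsto_mult_left tendsto_norm grouped_prod_tendsto)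
  show "\<forall>\<^sub>F Y in finite_subsets_at_top (upper_zeros F).
          off_strip_const * exp (- (20 * re_bound * \<sigma> * infsum (shifted_weight \<sigma>) (nz_zeros F)))
            * norm (\<Prod>\<rho>\<in>Y. grouped_factor F (of_real \<sigma>) \<rho>)
          \<le> norm (\<Prod>\<rho>\<in>Y. grouped_factor F (of_real (1 - \<sigma>)) \<rho>)"
    by (rule eventually_finite_subsets_at_top_weakI) (rule prod_grouped_factor_reflection_ge[OF _ _ assms])
qed simp

lemma norm_F_of_real:
  assumes "Im slope = 0"
  shows "norm (F (of_real x)) = exp (Re a) * \<bar>x\<bar> ^ m0 * exp (Re slope * x) * norm (grouped_prod (of_real x))"
proof -
  have "Re (slope * of_real x) = Re slope * x"
    using assms by simp
  then show ?thesis
    unfolding F_eq_grouped_prod[of "of_real x"] by (simp add: norm_mult norm_power)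
qed

lemma norm_reflection_ratio_ge:
  assumes slope: "Im slope = 0" and \<sigma>: "\<sigma> \<ge> reflection_threshold" "\<sigma> \<ge> 2"
    and nonzero: "F (of_real \<sigma>) \<noteq> 0"
  defines "L \<equiv> 20 * re_bound * \<sigma> * infsum (shifted_weight \<sigma>) (nz_zeros F)"
  shows "(1/2) ^ m0 * off_strip_const * exp (Re slope * (1 - 2 * \<sigma>) - L)
           \<le> norm (F (of_real (1 - \<sigma>)) / F (of_real \<sigma>))"
proof -
  define B where "B = Re slope"
  define n0 where "n0 = norm (grouped_prod (of_real \<sigma>))"
  define n1 where "n1 = norm (grouped_prod (of_real (1 - \<sigma>)))"
  have F1: "norm (F (of_real (1 - \<sigma>))) = exp (Re a) * (\<sigma> - 1) ^ m0 * exp (B * (1 - \<sigma>)) * n1"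
    using norm_F_of_real[OF slope, of "1 - \<sigma>"] \<sigma>(2) unfolding B_def n1_def by simp
  have F0: "norm (F (of_real \<sigma>)) = exp (Re a) * \<sigma> ^ m0 * exp (B * \<sigma>) * n0"
    using norm_F_of_real[OF slope, of \<sigma>] \<sigma>(2) unfolding B_def n0_def by simp
  have "n0 \<noteq> 0"
    using nonzero F0 by auto
  then have "n0 > 0"
    unfolding n0_def by simp
  have "(\<sigma> / 2) ^ m0 \<le> (\<sigma> - 1) ^ m0"
    using \<sigma>(2) by (intro power_mono) auto
  then have "(1/2) ^ m0 * \<sigma> ^ m0 \<le> (\<sigma> - 1) ^ m0"
    by (simp add: power_divide)
  moreover have "off_strip_const * exp (- L) * n0 \<le> n1"
    using norm_grouped_prod_reflection_ge[OF \<sigma>(1)] unfolding L_def n0_def n1_def .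
  ultimately have numerator: "exp (Re a) * ((1/2) ^ m0 * \<sigma> ^ m0) * exp (B * (1 - \<sigma>))
        * (off_strip_const * exp (- L) * n0) \<le> norm (F (of_real (1 - \<sigma>)))"
    unfolding F1 using \<sigma>(2) \<open>n0 > 0\<close> off_strip_const_pos
    by (intro mult_mono mult_nonneg_nonneg) auto
  have "exp (B * (1 - 2 * \<sigma>) - L) = exp (B * (1 - \<sigma>)) * exp (- L) / exp (B * \<sigma>)"
    unfolding exp_diff[symmetric] exp_add[symmetric] by (simp add: algebra_simps)
  then have "(1/2) ^ m0 * off_strip_const * exp (B * (1 - 2 * \<sigma>) - L)
      = exp (Re a) * ((1/2) ^ m0 * \<sigma> ^ m0) * exp (B * (1 - \<sigma>))
          * (off_strip_const * exp (- L) * n0) / norm (F (of_real \<sigma>))"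
    unfolding F0 using \<open>n0 > 0\<close> \<sigma>(2) by (simp add: field_simps)
  also have "\<dots> \<le> norm (F (of_real (1 - \<sigma>))) / norm (F (of_real \<sigma>))"
    using numerator by (intro divide_right_mono) auto
  finally show ?thesis
    unfolding B_def by (simp add: norm_divide)
qed

lemma Re_slope_nonneg:
  assumes nonzero: "\<forall>\<^sub>F \<sigma> in at_top. F (of_real \<sigma>) \<noteq> 0"
    and ratio: "((\<lambda>\<sigma>. F (of_real (1 - \<sigma>)) / F (of_real \<sigma>)) \<longlongrightarrow> 0) at_top"
    and slope: "Im slope = 0"
  shows "Re slope \<ge> 0"
proof (rule ccontr)
  assume "\<not> Re slope \<ge> 0"
  define \<kappa> where "\<kappa> = (1/2) ^ m0 * off_strip_const"
  have "\<kappa> > 0"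
    unfolding \<kappa>_def using off_strip_const_pos by simp
  have "\<forall>\<^sub>F \<sigma> in at_top. infsum (shifted_weight \<sigma>) (nz_zeros F) \<le> - Re slope / (20 * re_bound)"
    using \<open>\<not> Re slope \<ge> 0\<close> re_bound_ge_1 by (intro shifted_weight_sum_small divide_pos_pos) auto
  moreover have "\<forall>\<^sub>F \<sigma> in at_top. norm (F (of_real (1 - \<sigma>)) / F (of_real \<sigma>)) < \<kappa>"
    using tendsto_norm[OF ratio] \<open>\<kappa> > 0\<close> order_tendstoD(2) by fastforce
  moreover have "\<forall>\<^sub>F \<sigma> in at_top. \<sigma> \<ge> max reflection_threshold 2"
    by (rule eventually_ge_at_top)
  ultimately have "\<forall>\<^sub>F \<sigma> in at_top. F (of_real \<sigma>) \<noteq> 0 \<and>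
      infsum (shifted_weight \<sigma>) (nz_zeros F) \<le> - Re slope / (20 * re_bound) \<and>
      norm (F (of_real (1 - \<sigma>)) / F (of_real \<sigma>)) < \<kappa> \<and> \<sigma> \<ge> max reflection_threshold 2"
    using nonzero by eventually_elim blast
  then obtain \<sigma> where \<sigma>: "F (of_real \<sigma>) \<noteq> 0" "infsum (shifted_weight \<sigma>) (nz_zeros F) \<le> - Re slope / (20 * re_bound)"
      "norm (F (of_real (1 - \<sigma>)) / F (of_real \<sigma>)) < \<kappa>" "\<sigma> \<ge> reflection_threshold" "\<sigma> \<ge> 2"
    using eventually_happens'[OF trivial_limit_at_top_linorder] by auto
  define L where "L = 20 * re_bound * \<sigma> * infsum (shifted_weight \<sigma>) (nz_zeros F)"
  \<comment> \<open>the loss \<open>L\<close> is at most \<open>|Re slope| \<sigma>\<close>, so the exponent stays nonnegative\<close>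
  have "L \<le> 20 * re_bound * \<sigma> * (- Re slope / (20 * re_bound))"
    unfolding L_def using \<sigma>(2,5) re_bound_ge_1 by (intro mult_left_mono) auto
  then have "Re slope * (1 - \<sigma>) \<le> Re slope * (1 - 2 * \<sigma>) - L"
    using re_bound_ge_1 by (simp add: algebra_simps)
  moreover have "0 \<le> Re slope * (1 - \<sigma>)"
    using \<open>\<not> Re slope \<ge> 0\<close> \<sigma>(5) by (intro mult_nonpos_nonpos) auto
  ultimately have "\<kappa> \<le> \<kappa> * exp (Re slope * (1 - 2 * \<sigma>) - L)"
    using \<open>\<kappa> > 0\<close> by simp
  also have "\<dots> \<le> norm (F (of_real (1 - \<sigma>)) / F (of_real \<sigma>))"
    using norm_reflection_ratio_ge[OF slope \<sigma>(4,5,1)] unfolding \<kappa>_def L_def by simp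
  finally show False
    using \<sigma>(3) by simp
qed

end

theorem lemma1:
  fixes F :: "complex \<Rightarrow> complex"
  assumes genus: "genus_le_one F"
    and real_on_real: "\<forall>x::real. F (complex_of_real x) \<in> \<real>"
    and strip: "\<exists>\<sigma>0::real. finite {\<rho>. F \<rho> = 0 \<and> \<not> (\<sigma>0 < Re \<rho> \<and> Re \<rho> < 1/2)}"
    and halfplane: "finite {\<rho>. F \<rho> = 0 \<and> Re \<rho> \<ge> 1/2}"
    and count: "\<exists>C>0. \<forall>\<^sub>F T in at_top. real (zero_count F T) \<le> C * T * ln T"
    and ratio_pos: "\<forall>\<^sub>F \<sigma> in at_top.
         F (complex_of_real (1 - \<sigma>)) / F (complex_of_real \<sigma>) \<in> \<real> \<and>
         Re (F (complex_of_real (1 - \<sigma>)) / F (complex_of_real \<sigma>)) > 0"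
    and ratio_lim: "((\<lambda>\<sigma>::real. F (complex_of_real (1 - \<sigma>)) / F (complex_of_real \<sigma>)) \<longlongrightarrow> 0) at_top"
  shows "\<exists>(C'::complex) (m::nat) (B'::real) (P::complex \<Rightarrow> complex). B' \<ge> 0 \<and>
           (\<forall>s. (\<lambda>\<rho>. norm (grouped_factor F s \<rho> - 1)) summable_on upper_zeros F) \<and>
           (\<forall>K. compact K \<longrightarrow>
              uniform_limit K (\<lambda>X s. \<Prod>\<rho>\<in>X. grouped_factor F s \<rho>) P
                (finite_subsets_at_top (upper_zeros F))) \<and>
           (\<forall>s. F s = C' * s ^ m * exp (complex_of_real B' * s) * P s)"
proof -
  obtain a b :: complex and m0 :: nat and Q :: "complex \<Rightarrow> complex" where
    "\<And>s. set_prod_conv (\<lambda>\<rho>. ((1 - s / \<rho>) * exp (s / \<rho>)) ^ zero_mult F \<rho>) (nz_zeros F) (Q s)"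
    "\<And>s. F s = exp (a + b * s) * s ^ m0 * Q s"
    using genus unfolding genus_le_one_def by blast
  moreover obtain \<sigma>0 :: real where "finite {\<rho>. F \<rho> = 0 \<and> \<not> (\<sigma>0 < Re \<rho> \<and> Re \<rho> < 1/2)}"
    using strip by blast
  ultimately interpret hadamard_genus_one F \<sigma>0 a b m0 Q
    using genus real_on_real by unfold_locales (auto simp: genus_le_one_def)
  have nonzero: "\<forall>\<^sub>F \<sigma> in at_top. F (of_real \<sigma>) \<noteq> 0"
    using ratio_pos by eventually_elim auto
  have "Im slope = 0"
    using Im_slope_eq_0[OF nonzero] .
  then have "of_real (Re slope) = slope" "Re slope \<ge> 0"
    using Re_slope_nonneg[OF nonzero ratio_lim] by (simp_all add: complex_eq_iff)
  then show ?thesis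
    using norm_grouped_factor_minus_one_summable uniform_limit_grouped_prod F_eq_grouped_prod
    by (intro exI[of _ "exp a"] exI[of _ m0] exI[of _ "Re slope"] exI[of _ grouped_prod]) auto
qed

end
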